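(* Fix a positive integer $n$ and a nonzero $n$-partition $\lambda$ with $\lambda_n=0$. For every $n$-semistandard tableau $T$ of shape $\lambda$, the final permutation $\pi_T$ of the greedy procedure lies in $S_n^\lambda$.
   Context: Identify $\lambda=(\lambda_1,\dots,\lambda_n)$ with its Young diagram; $c_j$ is the length of column $j$; $\zeta_1<\dots<\zeta_d$ are the distinct column lengths, $\zeta_0:=0$, $\zeta_{d+1}:=n$. $S_n^\lambda$ is the set of permutations $\phi$ (one-line form) with $\phi_{\zeta_{h-1}+1}<\dots<\phi_{\zeta_h}$ for $1\le h\le d+1$. Write $(j,i)$ for the box in column $j$, row $i$. Reading order: $(l,k)\le(j,i)$ iff $l<j$, or $l=j$ and $k\ge i$; convention $(j,c_j+1)$ means $(j-1,1)$. An $n$-semistandard tableau $T$ of shape $\lambda$ has entries in $[n]$, weakly increasing along rows, strictly increasing down columns; $T(j,i)$ is its entry, $C_j$ its $j$-th column. Greedy procedure: $\pi^{(1,1)}$ has first $c_1$ entries those of $C_1$ increasing, followed by the rest of $[n]$ increasing. For $(j,i)$ with $j\ge2$ in reading order from $(2,c_2)$ to $(\lambda_1,1)$, define $\pi^{(j,i)}$ from $\pi:=\pi^{(j,i+1)}$: if $T(j-1,i)=T(j,i)$ set $\pi^{(j,i)}=\pi$; otherwise let $i_0=i$, and given $i_{x-1}$ with $\pi_{i_{x-1}}<T(j,i)$ let $i_x$ be the smallest index $>c_j$ with $\pi_{i_{x-1}}<\pi_{i_x}\le T(j,i)$, stopping at $i_m$ with $\pi_{i_m}=T(j,i)$; set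 $\pi^{(j,i)}_{i_x}=\pi_{i_{x-1}}$ ($1\le x\le m$), $\pi^{(j,i)}_{i_0}=\pi_{i_m}$, others unchanged. $\pi_T:=\pi^{(\lambda_1,1)}$. *)

theory Defs
  imports "HOL-Combinatorics.Permutations"
begin

(* Partitions lam are functions on rows 1..n; a tableau T maps (column j, row i) to T j i.
   Permutations in one-line form are functions pi :: nat => nat with pi permutes {1..n}. *)

definition n_partition :: "nat \<Rightarrow> (nat \<Rightarrow> nat) \<Rightarrow> bool" where
  "n_partition n lam \<longleftrightarrow> (\<forall>i. 1 \<le> i \<and> i < n \<longrightarrow> lam (i+1) \<le> lam i)"

definition col_len :: "nat \<Rightarrow> (nat \<Rightarrow> nat) \<Rightarrow> nat \<Rightarrow> nat" where
  "col_len n lam j = card {i \<in> {1..n}. j \<le> lam i}"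

definition in_shape :: "nat \<Rightarrow> (nat \<Rightarrow> nat) \<Rightarrow> nat \<Rightarrow> nat \<Rightarrow> bool" where
  "in_shape n lam j i \<longleftrightarrow> 1 \<le> i \<and> i \<le> n \<and> 1 \<le> j \<and> j \<le> lam i"

definition semistandard :: "nat \<Rightarrow> (nat \<Rightarrow> nat) \<Rightarrow> (nat \<Rightarrow> nat \<Rightarrow> nat) \<Rightarrow> bool" where
  "semistandard n lam T \<longleftrightarrow>
     (\<forall>j i. in_shape n lam j i \<longrightarrow> T j i \<in> {1..n}) \<and>
     (\<forall>j i. in_shape n lam (j+1) i \<longrightarrow> T j i \<le> T (j+1) i) \<and>
     (\<forall>j i. in_shape n lam j (i+1) \<longrightarrow> T j i < T j (i+1))"

definition col_lengths :: "nat \<Rightarrow> (nat \<Rightarrow> nat) \<Rightarrow> nat set" where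
  "col_lengths n lam = {col_len n lam j | j. 1 \<le> j \<and> j \<le> lam 1}"

definition zeta :: "nat \<Rightarrow> (nat \<Rightarrow> nat) \<Rightarrow> nat list" where
  "zeta n lam = 0 # sorted_list_of_set (col_lengths n lam) @ [n]"

definition S_lam :: "nat \<Rightarrow> (nat \<Rightarrow> nat) \<Rightarrow> (nat \<Rightarrow> nat) set" where
  "S_lam n lam = {phi. phi permutes {1..n} \<and>
     (\<forall>h. 1 \<le> h \<and> h \<le> card (col_lengths n lam) + 1 \<longrightarrow>
        (\<forall>k. zeta n lam ! (h-1) + 1 \<le> k \<and> k < zeta n lam ! h \<longrightarrow> phi k < phi (k+1)))}"

definition greedy_init :: "nat \<Rightarrow> (nat \<Rightarrow> nat) \<Rightarrow> (nat \<Rightarrow> nat \<Rightarrow> nat) \<Rightarrow> nat \<Rightarrow> nat" where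
  "greedy_init n lam T k =
     (if k < 1 \<or> n < k then k
      else if k \<le> col_len n lam 1 then T 1 k
      else sorted_list_of_set ({1..n} - {T 1 i | i. 1 \<le> i \<and> i \<le> col_len n lam 1})
             ! (k - col_len n lam 1 - 1))"

definition chain_ok :: "nat \<Rightarrow> nat \<Rightarrow> nat \<Rightarrow> (nat \<Rightarrow> nat) \<Rightarrow> nat \<Rightarrow> nat \<Rightarrow> bool" where
  "chain_ok n c t pi p k \<longleftrightarrow> c < k \<and> k \<le> n \<and> pi p < pi k \<and> pi k \<le> t"

(* chain n c t pi p = [i_1, ..., i_m] starting from i_0 = p:
   i_x is the smallest index > c with pi(i_(x-1)) < pi(i_x) <= t; stop when pi(i_m) = t *)
function chain :: "nat \<Rightarrow> nat \<Rightarrow> nat \<Rightarrow> (nat \<Rightarrow> nat) \<Rightarrow> nat \<Rightarrow> nat list" where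
  "chain n c t pi p =
     (if pi p < t \<and> (\<exists>k. chain_ok n c t pi p k)
      then (let q = (LEAST k. chain_ok n c t pi p k) in q # chain n c t pi q)
      else [])"
  by pat_completeness auto
termination
proof (relation "measure (\<lambda>(n, c, t, pi, p). t - pi p)")
  fix n c t pi p q
  assume h: "pi p < t \<and> (\<exists>k. chain_ok n c t pi p k)" and q: "q = (LEAST k. chain_ok n c t pi p k)"
  then have "chain_ok n c t pi p q" using LeastI_ex by metis
  then show "((n, c, t, pi, q), n, c, t, pi, p) \<in> measure (\<lambda>(n, c, t, pi, p). t - pi p)"
    using h unfolding chain_ok_def by auto
qed auto

(* given indices i_0 # [i_1..i_m], set pi'(i_x) = pi(i_(x-1)) for 1<=x<=m, pi'(i_0) = pi(i_m) *)
definition cycle_along :: "(nat \<Rightarrow> nat) \<Rightarrow> nat list \<Rightarrow> nat \<Rightarrow> nat" where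
  "cycle_along pi is k =
     (if k = hd is then pi (last is)
      else (case [x \<leftarrow> [1..<length is]. is ! x = k] of
              [] \<Rightarrow> pi k
            | x # _ \<Rightarrow> pi (is ! (x - 1))))"

(* step producing pi^(j,i) from pi = pi^(j,i+1) *)
definition greedy_step :: "nat \<Rightarrow> (nat \<Rightarrow> nat) \<Rightarrow> (nat \<Rightarrow> nat \<Rightarrow> nat) \<Rightarrow> nat \<Rightarrow> nat \<Rightarrow>
    (nat \<Rightarrow> nat) \<Rightarrow> (nat \<Rightarrow> nat)" where
  "greedy_step n lam T j i pi =
     (if T (j-1) i = T j i then pi
      else cycle_along pi (i # chain n (col_len n lam j) (T j i) pi i))"

definition greedy_perm :: "nat \<Rightarrow> (nat \<Rightarrow> nat) \<Rightarrow> (nat \<Rightarrow> nat \<Rightarrow> nat) \<Rightarrow> nat \<Rightarrow> nat" where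
  "greedy_perm n lam T =
     fold (\<lambda>j pi. fold (\<lambda>i. greedy_step n lam T j i) (rev [1..<col_len n lam j + 1]) pi)
          [2..<lam 1 + 1] (greedy_init n lam T)"

end

theory Submission
  imports Defs
begin

text \<open>
  While column j is processed, the permutation keeps rows 1..c_j equal to column j (rows below
  the current box still carry column j-1), and beyond position c_j it ascends except at the column
  lengths c_1, ..., c_j.  A step replaces the entry in row i by T(j,i) by cycling the values along
  the greedy chain i = i_0, i_1, ..., i_m.  The chain lies beyond c_j, its values increase, and each
  i_x is the first admissible index; together this rules out a new descent beyond c_j.  Once the
  last column is placed, rows 1..c_{lambda_1} carry a strictly increasing column, so descents occur
  only at column lengths, which is the defining property of S_n^lambda.
\<close>

lemma cycle_along_hd: "cycle_along pi is (hd is) = pi (last is)"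
  by (simp add: cycle_along_def)

lemma cycle_along_nth:
  assumes "distinct is" "0 < x" "x < length is"
  shows "cycle_along pi is (is ! x) = pi (is ! (x - 1))"
proof -
  have "is \<noteq> []"
    using assms(3) by (cases "is") auto
  then have "is ! x \<noteq> hd is"
    using nth_eq_iff_index_eq[OF assms(1,3), of 0] assms(2) by (simp add: hd_conv_nth)
  moreover have "[y \<leftarrow> [1..<length is]. is ! y = is ! x] = [x]"
    using assms by (intro sorted_distinct_set_unique) (auto simp: nth_eq_iff_index_eq intro!: sorted_wrt_filter)
  ultimately show ?thesis
    unfolding cycle_along_def by simp
qed

lemma cycle_along_notin:
  assumes "k \<notin> set is" "is \<noteq> []"
  shows "cycle_along pi is k = pi k"
proof -
  have "[y \<leftarrow> [1..<length is]. is ! y = k] = []"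
    using assms(1) by (auto simp: filter_empty_conv)
  then show ?thesis
    using assms by (auto simp: cycle_along_def)
qed

lemma cycle_along_eq_comp: "cycle_along pi is = pi \<circ> cycle_along id is"
  by (rule ext, simp add: cycle_along_def split: list.split)

lemma cycle_along_id_permutes:
  assumes "distinct is" "is \<noteq> []"
  shows "cycle_along id is permutes set is"
proof (rule inj_imp_permutes)
  let ?s = "cycle_along id is"
  have hd_last: "?s (hd is) = last is" "hd is \<in> set is" "last is \<in> set is"
    using assms cycle_along_hd[of id "is"] by auto
  have shift: "?s (is ! x) = is ! (x - 1)" if "0 < x" "x < length is" for x
    using cycle_along_nth[OF assms(1) that] by simp
  have image: "?s ` set is = set is"
  proof
    show "?s ` set is \<subseteq> set is"
    proof
      fix b assume "b \<in> ?s ` set is"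
      then obtain x where x: "x < length is" "b = ?s (is ! x)"
        by (auto simp: in_set_conv_nth)
      show "b \<in> set is"
      proof (cases "x = 0")
        case True
        then show ?thesis using x hd_last assms(2) by (simp add: hd_conv_nth)
      next
        case False
        then show ?thesis using x shift[of x] by simp
      qed
    qed
    show "set is \<subseteq> ?s ` set is"
    proof
      fix a assume "a \<in> set is"
      then obtain y where y: "y < length is" "a = is ! y" by (auto simp: in_set_conv_nth)
      show "a \<in> ?s ` set is"
      proof (cases "y + 1 < length is")
        case True
        then show ?thesis using y shift[of "y + 1"] by (force intro: nth_mem)
      next
        case False
        then have "y = length is - 1" using y by linarith
        then have "a = last is"
          using y assms(2) by (simp add: last_conv_nth)
        then show ?thesis
          using hd_last by (metis image_eqI)
      qed
    qed
  qed
  then show "inj_on ?s (set is)"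
    by (intro eq_card_imp_inj_on) simp_all
  show "?s x \<in> set is" if "x \<in> set is" for x
    using image that by blast
  show "?s x = x" if "x \<notin> set is" for x
    using cycle_along_notin[OF that assms(2)] by simp
qed simp

lemma cycle_along_permutes:
  assumes "pi permutes A" "distinct is" "is \<noteq> []" "set is \<subseteq> A"
  shows "cycle_along pi is permutes A"
  unfolding cycle_along_eq_comp[of pi]
  using permutes_compose[OF permutes_subset[OF cycle_along_id_permutes[OF assms(2,3)] assms(4)] assms(1)] .

lemma permutes_nth_distinct:
  assumes "distinct xs" "set xs = {1..length xs}"
  shows "(\<lambda>k. if k < 1 \<or> length xs < k then k else xs ! (k - 1)) permutes {1..length xs}"
proof (rule inj_imp_permutes)
  show "inj_on (\<lambda>k. if k < 1 \<or> length xs < k then k else xs ! (k - 1)) {1..length xs}"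
  proof (rule inj_onI)
    fix a b
    assume "a \<in> {1..length xs}" "b \<in> {1..length xs}"
      and "(if a < 1 \<or> length xs < a then a else xs ! (a - 1)) = (if b < 1 \<or> length xs < b then b else xs ! (b - 1))"
    then have "a - 1 = b - 1"
      using nth_eq_iff_index_eq[OF assms(1), of "a - 1" "b - 1"] by auto
    with \<open>a \<in> {1..length xs}\<close> \<open>b \<in> {1..length xs}\<close> show "a = b"
      by (cases a; cases b) auto
  qed
qed (use assms(2) in \<open>auto intro: nth_mem\<close>)

declare chain.simps [simp del]

lemma chain_cases:
  obtains (Nil) "chain n c t pi p = []" "\<not> (pi p < t \<and> (\<exists>k. chain_ok n c t pi p k))"
  | (Cons) q where "q = (LEAST k. chain_ok n c t pi p k)" "chain_ok n c t pi p q" "pi p < t"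
    "chain n c t pi p = q # chain n c t pi q"
proof (cases "pi p < t \<and> (\<exists>k. chain_ok n c t pi p k)")
  case True
  define q where "q = (LEAST k. chain_ok n c t pi p k)"
  have "chain_ok n c t pi p q"
    using True LeastI_ex unfolding q_def by metis
  moreover have "chain n c t pi p = q # chain n c t pi q"
    using True unfolding q_def by (subst chain.simps) (simp add: Let_def)
  ultimately show ?thesis
    using Cons q_def True by blast
next
  case False
  then have "chain n c t pi p = []"
    by (subst chain.simps) (use False in auto)
  with False show ?thesis
    using Nil by blast
qed

lemma set_chain: "q \<in> set (chain n c t pi p) \<Longrightarrow> c < q \<and> q \<le> n \<and> pi q \<le> t"
proof (induction n c t pi p rule: chain.induct)
  case (1 n c t pi p)
  show ?case
  proof (cases n c t pi p rule: chain_cases)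
    case Nil
    with "1.prems" show ?thesis by simp
  next
    case (Cons q')
    with "1.prems" "1.IH" show ?thesis
      unfolding chain_ok_def by auto
  qed
qed

lemma sorted_chain: "sorted_wrt (\<lambda>a b. pi a < pi b) (p # chain n c t pi p)"
proof (induction n c t pi p rule: chain.induct)
  case (1 n c t pi p)
  show ?case
  proof (cases n c t pi p rule: chain_cases)
    case Nil
    then show ?thesis by simp
  next
    case (Cons q)
    with "1.IH" show ?thesis
      unfolding chain_ok_def by (auto intro: less_trans)
  qed
qed

lemma distinct_chain: "distinct (p # chain n c t pi p)"
proof -
  have "sorted_wrt (<) (map pi (p # chain n c t pi p))"
    using sorted_chain[of pi p n c t] by (simp add: sorted_wrt_map)
  then show ?thesis
    using strict_sorted_iff distinct_map by blast
qed

lemma chain_greedy: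
  assumes "x < length (chain n c t pi p)" "c < k" "k < chain n c t pi p ! x" "k \<le> n"
    and "pi ((p # chain n c t pi p) ! x) < pi k"
  shows "t < pi k"
  using assms
proof (induction n c t pi p arbitrary: x rule: chain.induct)
  case (1 n c t pi p)
  show ?case
  proof (cases n c t pi p rule: chain_cases)
    case Nil
    with "1.prems" show ?thesis by simp
  next
    case (Cons q)
    show ?thesis
    proof (cases x)
      case 0
      then have "\<not> chain_ok n c t pi p k"
        using Cons "1.prems" by (auto dest: not_less_Least)
      then show ?thesis
        using 0 "1.prems" unfolding chain_ok_def by auto
    next
      case (Suc x')
      then show ?thesis
        using Cons "1.prems" "1.IH"[of q x'] by auto
    qed
  qed
qed

lemma last_chain:
  assumes "c < q" "q \<le> n" "pi q = t" "pi p < t"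
  shows "chain n c t pi p \<noteq> [] \<and> pi (last (chain n c t pi p)) = t"
  using assms
proof (induction n c t pi p rule: chain.induct)
  case (1 n c t pi p)
  then have "chain_ok n c t pi p q"
    by (simp add: chain_ok_def)
  then show ?case
  proof (cases n c t pi p rule: chain_cases)
    case Nil
    with \<open>chain_ok n c t pi p q\<close> "1.prems"(4) show ?thesis by blast
  next
    case (Cons q')
    show ?thesis
    proof (cases "pi q' < t")
      case True
      with "1.prems" "1.IH"[of q'] Cons show ?thesis by auto
    next
      case False
      then have "chain n c t pi q' = []"
        by (cases n c t pi q' rule: chain_cases) auto
      with False Cons show ?thesis
        unfolding chain_ok_def by auto
    qed
  qed
qed

lemma cycle_along_chain_ascent:
  fixes pi :: "nat \<Rightarrow> nat"
  assumes "inj pi" "p \<le> c" "c < k" "k < n" "pi k < pi (Suc k)"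
  shows "cycle_along pi (p # chain n c t pi p) k < cycle_along pi (p # chain n c t pi p) (Suc k)"
proof -
  define ch where "ch = chain n c t pi p"
  define ys where "ys = p # ch"
  let ?new = "cycle_along pi ys"
  have sorted: "sorted_wrt (<) (map pi ys)"
    using sorted_chain[of pi p n c t] by (simp add: ys_def ch_def sorted_wrt_map)
  have "distinct ys"
    using distinct_chain by (simp add: ys_def ch_def del: distinct.simps)
  have less: "pi (ys ! a) < pi (ys ! b)" if "a < b" "b < length ys" for a b
    using sorted that by (simp add: sorted_wrt_iff_nth_less)
  have shifted: "?new (ch ! x) = pi (ys ! x)" if "x < length ch" for x
    using cycle_along_nth[OF \<open>distinct ys\<close>, of "Suc x" pi] that by (simp add: ys_def)
  have fixed: "?new m = pi m" if "m \<notin> set ch" "c < m" for m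
    using that assms(2) by (intro cycle_along_notin) (auto simp: ys_def)
  have in_ch: "pi m \<le> t" if "m \<in> set ch" for m
    using set_chain that by (auto simp: ch_def)
  have "?new k < ?new (Suc k)"
  proof (cases "k \<in> set ch"; cases "Suc k \<in> set ch")
    assume "k \<in> set ch" "Suc k \<in> set ch"
    then obtain x y where xy: "x < length ch" "k = ch ! x" "y < length ch" "Suc k = ch ! y"
      by (auto simp: in_set_conv_nth)
    have "x < y"
    proof (rule ccontr)
      assume "\<not> x < y"
      moreover have "x \<noteq> y" using xy by auto
      ultimately have "pi (ys ! Suc y) \<le> pi (ys ! x)"
        using less[of "Suc y" x] xy by (cases "Suc y = x") (auto simp: ys_def)
      also have "\<dots> < pi (ys ! Suc x)"
        using less[of x "Suc x"] xy by (simp add: ys_def)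
      finally show False
        using xy assms(5) by (simp add: ys_def)
    qed
    then show ?thesis
      using xy shifted less[of x y] by (simp add: ys_def)
  next
    assume "k \<in> set ch" "Suc k \<notin> set ch"
    then obtain x where x: "x < length ch" "k = ch ! x"
      by (auto simp: in_set_conv_nth)
    have "?new k = pi (ys ! x)" using shifted x by simp
    also have "\<dots> < pi (ys ! Suc x)" using less[of x "Suc x"] x by (simp add: ys_def)
    also have "\<dots> = pi k" using x by (simp add: ys_def)
    also have "\<dots> < pi (Suc k)" by (rule assms(5))
    also have "\<dots> = ?new (Suc k)" using fixed \<open>Suc k \<notin> set ch\<close> assms(3) by simp
    finally show ?thesis .
  next
    assume "k \<notin> set ch" "Suc k \<in> set ch"
    then obtain x where x: "x < length ch" "Suc k = ch ! x"
      by (auto simp: in_set_conv_nth)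
    \<comment> \<open>c < k < i_x, so the greedy choice of i_x rules out pi i_(x-1) < pi k \<le> t\<close>
    have "ys ! x \<noteq> k"
      using \<open>k \<notin> set ch\<close> assms(2,3) x by (cases x) (auto simp: ys_def)
    then have "pi (ys ! x) \<noteq> pi k"
      using assms(1) by (auto dest: injD)
    moreover have "\<not> pi (ys ! x) < pi k"
      using chain_greedy[of x n c t pi p k] in_ch[of "Suc k"] x assms(3-5) \<open>Suc k \<in> set ch\<close>
      by (auto simp: ch_def ys_def)
    ultimately show ?thesis
      using fixed[of k] shifted x \<open>k \<notin> set ch\<close> assms(3) by simp
  next
    assume "k \<notin> set ch" "Suc k \<notin> set ch"
    then show ?thesis
      using fixed assms(3,5) by simp
  qed
  then show ?thesis
    by (simp add: ys_def ch_def)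
qed

lemma n_partition_antimono:
  assumes "n_partition n lam" "1 \<le> i" "i \<le> i'" "i' \<le> n"
  shows "lam i' \<le> lam i"
  using assms(3,4)
proof (induction i' rule: dec_induct)
  case (step m)
  then have "lam (m + 1) \<le> lam m"
    using assms(1,2) unfolding n_partition_def by simp
  with step.IH step.prems show ?case
    by simp
qed simp

lemma col_len_rows:
  assumes "n_partition n lam"
  shows "{i \<in> {1..n}. j \<le> lam i} = {1..col_len n lam j}"
proof -
  define S where "S = {i \<in> {1..n}. j \<le> lam i}"
  have "S = {1..Max S}" if "S \<noteq> {}"
  proof
    show "S \<subseteq> {1..Max S}"
      by (auto simp: S_def)
    have "Max S \<in> S"
      using that by (intro Max_in) (simp_all add: S_def)
    then show "{1..Max S} \<subseteq> S"
      using n_partition_antimono[OF assms] by (auto simp: S_def intro: order_trans)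
  qed
  then have "S = {1..card S}"
    by (cases "S = {}") (simp, metis card_atLeastAtMost diff_Suc_1)
  then show ?thesis
    by (simp add: S_def col_len_def)
qed

lemma le_col_len_iff:
  assumes "n_partition n lam" "1 \<le> i" "i \<le> n"
  shows "j \<le> lam i \<longleftrightarrow> i \<le> col_len n lam j"
proof -
  have "i \<in> {i \<in> {1..n}. j \<le> lam i} \<longleftrightarrow> i \<in> {1..col_len n lam j}"
    using col_len_rows[OF assms(1), of j] by simp
  with assms(2,3) show ?thesis
    by simp
qed

lemma col_len_le: "col_len n lam j \<le> n"
  unfolding col_len_def by (rule order_trans[OF card_mono[of "{1..n}"]]) auto

lemma col_len_antimono: "j \<le> j' \<Longrightarrow> col_len n lam j' \<le> col_len n lam j"
  unfolding col_len_def by (rule card_mono) auto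

lemma col_len_less:
  assumes "n_partition n lam" "0 < n" "lam n = 0" "1 \<le> j"
  shows "col_len n lam j < n"
  using le_col_len_iff[OF assms(1), of n j] assms col_len_le[of n lam j] by simp

lemma sorted_nth_gap_notin:
  assumes "sorted xs" "h < length xs" "xs ! (h - 1) < k" "k < xs ! h"
  shows "k \<notin> set xs"
proof
  assume "k \<in> set xs"
  then obtain m where m: "m < length xs" "k = xs ! m"
    by (auto simp: in_set_conv_nth)
  show False
  proof (cases "m < h")
    case True
    then have "xs ! m \<le> xs ! (h - 1)"
      using assms(1,2) by (intro sorted_nth_mono) auto
    with m assms(3) show False by simp
  next
    case False
    then have "xs ! h \<le> xs ! m"
      using assms(1) m(1) by (intro sorted_nth_mono) auto
    with m assms(4) show False by simp
  qed
qed

lemma S_lamI: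
  assumes "phi permutes {1..n}"
    and "\<And>k. 0 < k \<Longrightarrow> k < n \<Longrightarrow> k \<notin> col_lengths n lam \<Longrightarrow> phi k < phi (Suc k)"
  shows "phi \<in> S_lam n lam"
  unfolding S_lam_def
proof (intro CollectI conjI assms(1) allI impI)
  fix h k
  let ?z = "zeta n lam"
  assume h: "1 \<le> h \<and> h \<le> card (col_lengths n lam) + 1"
    and k: "?z ! (h - 1) + 1 \<le> k \<and> k < ?z ! h"
  have "finite (col_lengths n lam)" "\<forall>x \<in> col_lengths n lam. x \<le> n"
    using col_len_le by (auto simp: col_lengths_def)
  then have "sorted ?z" "set ?z \<subseteq> {..n}"
    by (auto simp: zeta_def sorted_append)
  moreover have "h < length ?z"
    using h by (simp add: zeta_def)
  ultimately have "k \<notin> set ?z" "k < n"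
    using sorted_nth_gap_notin[of ?z h k] k nth_mem[of h ?z] by (auto simp del: nth_mem)
  moreover have "0 < k"
    using k by simp
  ultimately show "phi k < phi (k + 1)"
    using assms(2) \<open>finite (col_lengths n lam)\<close> by (simp add: zeta_def)
qed

text \<open>The permutation \<pi>^(j,i) of the greedy procedure satisfies greedy_inv n lam T j i; the result
  of column j-1 plays the role of \<pi>^(j,c_j+1).\<close>

definition greedy_inv :: "nat \<Rightarrow> (nat \<Rightarrow> nat) \<Rightarrow> (nat \<Rightarrow> nat \<Rightarrow> nat) \<Rightarrow> nat \<Rightarrow> nat \<Rightarrow> (nat \<Rightarrow> nat) \<Rightarrow> bool"
  where "greedy_inv n lam T j i pi \<longleftrightarrow> pi permutes {1..n} \<and>
    (\<forall>k. 1 \<le> k \<and> k < i \<longrightarrow> pi k = T (j - 1) k) \<and>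
    (\<forall>k. i \<le> k \<and> k \<le> col_len n lam j \<longrightarrow> pi k = T j k) \<and>
    (\<forall>k. col_len n lam j < k \<and> k < n \<and> k \<notin> col_len n lam ` {1..j} \<longrightarrow> pi k < pi (Suc k))"

locale semistandard_tableau =
  fixes n :: nat and lam :: "nat \<Rightarrow> nat" and T :: "nat \<Rightarrow> nat \<Rightarrow> nat"
  assumes n_pos: "0 < n"
    and partition: "n_partition n lam"
    and last_row_empty: "lam n = 0"
    and semistandard: "semistandard n lam T"
begin

lemma col_len_less_n: "1 \<le> j \<Longrightarrow> col_len n lam j < n"
  using col_len_less[OF partition n_pos last_row_empty] .

lemma in_shape_iff: "1 \<le> j \<Longrightarrow> in_shape n lam j i \<longleftrightarrow> 1 \<le> i \<and> i \<le> col_len n lam j"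
  using le_col_len_iff[OF partition, of i j] col_len_less_n[of j] by (auto simp: in_shape_def)

lemma entry_range: "1 \<le> j \<Longrightarrow> 1 \<le> i \<Longrightarrow> i \<le> col_len n lam j \<Longrightarrow> T j i \<in> {1..n}"
  using semistandard in_shape_iff[of j i] by (auto simp: semistandard_def)

lemma entry_row_mono: "1 \<le> j \<Longrightarrow> 1 \<le> i \<Longrightarrow> i \<le> col_len n lam (Suc j) \<Longrightarrow> T j i \<le> T (Suc j) i"
  using semistandard in_shape_iff[of "Suc j" i] by (auto simp: semistandard_def)

lemma entry_col_strict_mono:
  assumes "1 \<le> j" "1 \<le> i" "i < i'" "i' \<le> col_len n lam j"
  shows "T j i < T j i'"
proof -
  have "Suc i \<le> i'"
    using assms(3) by simp
  then show ?thesis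
    using assms(4)
  proof (induction i' rule: dec_induct)
    case base
    then show ?case
      using semistandard in_shape_iff[of j "Suc i"] assms(1,2) by (auto simp: semistandard_def)
  next
    case (step m)
    then have "T j m < T j (Suc m)"
      using semistandard in_shape_iff[of j "Suc m"] assms(1,2) by (auto simp: semistandard_def)
    with step show ?case
      by simp
  qed
qed

lemma greedy_inv_entry_above_column:
  assumes "2 \<le> j" "1 \<le> i" "i \<le> col_len n lam j" "greedy_inv n lam T j (Suc i) pi"
    and "T (j - 1) i < T j i"
  obtains q where "col_len n lam j < q" "q \<le> n" "pi q = T j i"
proof -
  have "pi permutes {1..n}"
    using assms(4) by (simp add: greedy_inv_def)
  moreover have "T j i \<in> {1..n}"
    using entry_range assms(1-3) by simp
  ultimately obtain q where q: "q \<in> {1..n}" "pi q = T j i"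
    by (metis permutes_image imageE)
  have "\<not> q \<le> col_len n lam j"
  proof
    assume "q \<le> col_len n lam j"
    then consider "q \<le> i" | "i < q" "q \<le> col_len n lam j" by linarith
    then show False
    proof cases
      case 1
      have "i \<le> col_len n lam (j - 1)" "1 \<le> j - 1"
        using col_len_antimono[of "j - 1" j n lam] assms(1,3) by simp_all
      then have "T (j - 1) q \<le> T (j - 1) i"
        using 1 q(1) entry_col_strict_mono[of "j - 1" q i] by (cases "q = i") auto
      moreover have "pi q = T (j - 1) q"
        using assms(4) 1 q(1) by (simp add: greedy_inv_def)
      ultimately show False
        using q(2) assms(5) by simp
    next
      case 2
      then have "pi q = T j q"
        using assms(4) by (simp add: greedy_inv_def)
      moreover have "T j i < T j q"
        using entry_col_strict_mono[of j i q] 2 assms(1,2) by simp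
      ultimately show False
        using q(2) by simp
    qed
  qed
  then show ?thesis
    using q that by (simp add: not_le)
qed

lemma greedy_step_inv:
  assumes j: "2 \<le> j" and i: "1 \<le> i" "i \<le> col_len n lam j"
    and inv: "greedy_inv n lam T j (Suc i) pi"
  shows "greedy_inv n lam T j i (greedy_step n lam T j i pi)"
proof -
  let ?c = "col_len n lam j"
  have perm: "pi permutes {1..n}"
    using inv by (simp add: greedy_inv_def)
  have pi_i: "pi i = T (j - 1) i"
    using inv i by (simp add: greedy_inv_def)
  have "T (j - 1) i \<le> T j i"
    using entry_row_mono[of "j - 1" i] j i by simp
  then consider "T (j - 1) i = T j i" | "T (j - 1) i < T j i"
    by linarith
  then show ?thesis
  proof cases
    case 1
    have "pi k = T j k" if "i \<le> k" "k \<le> ?c" for k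
      using that inv pi_i 1 by (cases "k = i") (auto simp: greedy_inv_def)
    with 1 inv show ?thesis
      by (auto simp: greedy_inv_def greedy_step_def)
  next
    case 2
    define t where "t = T j i"
    define ch where "ch = chain n ?c t pi i"
    let ?new = "cycle_along pi (i # ch)"
    obtain q where "?c < q" "q \<le> n" "pi q = t"
      using greedy_inv_entry_above_column[OF j i inv 2] by (auto simp: t_def)
    then have last: "ch \<noteq> []" "pi (last ch) = t"
      using last_chain[of ?c q n pi t i] 2 pi_i by (simp_all add: ch_def t_def)
    have ch_above: "?c < m \<and> m \<le> n" if "m \<in> set ch" for m
      using set_chain that by (auto simp: ch_def)
    have "set (i # ch) \<subseteq> {1..n}"
      using ch_above i col_len_less_n[of j] j by fastforce
    then have perm_new: "?new permutes {1..n}"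
      using distinct_chain[of i n ?c t pi] by (intro cycle_along_permutes[OF perm]) (auto simp: ch_def)
    have new_i: "?new i = t"
      using cycle_along_hd[of pi "i # ch"] last by simp
    have new_fixed: "?new k = pi k" if "k \<le> ?c" "k \<noteq> i" for k
      using that ch_above by (intro cycle_along_notin) (auto dest: leD)
    have step: "greedy_step n lam T j i pi = ?new"
      using 2 by (simp add: greedy_step_def t_def ch_def)
    show ?thesis
      unfolding step greedy_inv_def
    proof (intro conjI allI impI)
      fix k
      show "?new k = T (j - 1) k" if "1 \<le> k \<and> k < i"
        using that new_fixed[of k] inv i by (simp add: greedy_inv_def)
      show "?new k = T j k" if "i \<le> k \<and> k \<le> ?c"
        using that new_fixed[of k] new_i inv by (cases "k = i") (simp_all add: greedy_inv_def t_def)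
      show "?new k < ?new (Suc k)" if "?c < k \<and> k < n \<and> k \<notin> col_len n lam ` {1..j}"
        using cycle_along_chain_ascent[OF permutes_inj[OF perm], of i ?c k n t] that inv i
        by (simp add: greedy_inv_def ch_def)
    qed (use perm_new in simp)
  qed
qed

definition greedy_init_word :: "nat list"
  where "greedy_init_word = map (T 1) [1..<Suc (col_len n lam 1)] @
    sorted_list_of_set ({1..n} - T 1 ` {1..col_len n lam 1})"

lemma distinct_greedy_init_word: "distinct greedy_init_word"
proof -
  have "inj_on (T 1) {1..col_len n lam 1}"
  proof (rule linorder_inj_onI')
    fix i i' assume "i \<in> {1..col_len n lam 1}" "i' \<in> {1..col_len n lam 1}" "i < i'"
    then show "T 1 i \<noteq> T 1 i'"
      using entry_col_strict_mono[of 1 i i'] by simp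
  qed
  then show ?thesis
    by (auto simp: greedy_init_word_def distinct_map atLeastLessThanSuc_atLeastAtMost simp del: upt_Suc)
qed

lemma set_greedy_init_word: "set greedy_init_word = {1..n}"
  using entry_range[of 1] by (auto simp: greedy_init_word_def atLeastLessThanSuc_atLeastAtMost simp del: upt_Suc)

lemma length_greedy_init_word: "length greedy_init_word = n"
  using distinct_card[OF distinct_greedy_init_word] by (simp add: set_greedy_init_word)

lemma greedy_init_eq_nth:
  "greedy_init n lam T = (\<lambda>k. if k < 1 \<or> n < k then k else greedy_init_word ! (k - 1))"
proof
  fix k
  let ?c = "col_len n lam 1"
  have "{T 1 i | i. 1 \<le> i \<and> i \<le> ?c} = T 1 ` {1..?c}"
    by auto
  moreover have "k - 1 - ?c = k - ?c - 1"
    by simp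
  ultimately show "greedy_init n lam T k = (if k < 1 \<or> n < k then k else greedy_init_word ! (k - 1))"
    by (auto simp: greedy_init_def greedy_init_word_def nth_append simp del: upt_Suc)
qed

lemma greedy_init_inv: "greedy_inv n lam T 1 1 (greedy_init n lam T)"
proof -
  let ?c = "col_len n lam 1"
  let ?rest = "sorted_list_of_set ({1..n} - T 1 ` {1..?c})"
  have "length ?rest = n - ?c"
    using length_greedy_init_word by (simp add: greedy_init_word_def del: upt_Suc)
  moreover have "sorted_wrt (<) ?rest"
    by simp
  ultimately have "?rest ! (k - 1 - ?c) < ?rest ! (Suc k - 1 - ?c)" if "?c < k" "k < n" for k
    using that sorted_wrt_nth_less[of "(<)" ?rest "k - 1 - ?c" "Suc k - 1 - ?c"] by simp
  then have ascent: "greedy_init n lam T k < greedy_init n lam T (Suc k)" if "?c < k" "k < n" for k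
    using that by (simp add: greedy_init_eq_nth greedy_init_word_def nth_append del: upt_Suc)
  show ?thesis
    unfolding greedy_inv_def
  proof (intro conjI allI impI)
    show "greedy_init n lam T permutes {1..n}"
      using permutes_nth_distinct[OF distinct_greedy_init_word] set_greedy_init_word
      by (simp add: greedy_init_eq_nth length_greedy_init_word)
  qed (use col_len_less_n[of 1] ascent in \<open>auto simp: greedy_init_def\<close>)
qed

lemma greedy_column_steps_inv:
  assumes "2 \<le> j" "m \<le> col_len n lam j" "greedy_inv n lam T j (Suc m) pi"
  shows "greedy_inv n lam T j 1 (fold (greedy_step n lam T j) (rev [1..<Suc m]) pi)"
  using assms(2,3)
proof (induction m arbitrary: pi)
  case (Suc m)
  then have "greedy_inv n lam T j (Suc m) (greedy_step n lam T j (Suc m) pi)"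
    using greedy_step_inv[OF assms(1)] by simp
  with Suc.IH Suc.prems(1) show ?case
    by simp
qed simp

lemma greedy_column_inv:
  assumes "2 \<le> j" "greedy_inv n lam T (j - 1) 1 pi"
  shows "greedy_inv n lam T j 1 (fold (greedy_step n lam T j) (rev [1..<Suc (col_len n lam j)]) pi)"
proof (rule greedy_column_steps_inv[OF assms(1) order_refl])
  let ?c = "col_len n lam j" and ?c' = "col_len n lam (j - 1)"
  have "?c \<le> ?c'"
    using col_len_antimono[of "j - 1" j] by simp
  have prev_col: "pi k = T (j - 1) k" if "1 \<le> k" "k \<le> ?c'" for k
    using assms(2) that by (simp add: greedy_inv_def)
  have "pi k < pi (Suc k)" if "?c < k" "k < n" "k \<notin> col_len n lam ` {1..j}" for k
  proof (cases "?c' < k")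
    case True
    have "col_len n lam ` {1..j - 1} \<subseteq> col_len n lam ` {1..j}"
      by auto
    with that(3) have "k \<notin> col_len n lam ` {1..j - 1}"
      by blast
    with True that(2) assms(2) show ?thesis
      by (simp add: greedy_inv_def)
  next
    case False
    moreover have "?c' \<in> col_len n lam ` {1..j}"
      using assms(1) by force
    ultimately have "Suc k \<le> ?c'"
      using that(3) by (cases "k = ?c'") auto
    then show ?thesis
      using prev_col[of k] prev_col[of "Suc k"] entry_col_strict_mono[of "j - 1" k "Suc k"] assms(1) that(1)
      by simp
  qed
  with assms(2) \<open>?c \<le> ?c'\<close> show "greedy_inv n lam T j (Suc ?c) pi"
    by (auto simp: greedy_inv_def)
qed

lemma greedy_columns_inv:
  "1 \<le> m \<Longrightarrow> greedy_inv n lam T m 1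
     (fold (\<lambda>j pi. fold (greedy_step n lam T j) (rev [1..<col_len n lam j + 1]) pi)
       [2..<m + 1] (greedy_init n lam T))"
proof (induction m)
  case (Suc m)
  then show ?case
    using greedy_init_inv greedy_column_inv[of "Suc m"] by (cases "m = 0") auto
qed simp

lemma greedy_perm_inv: "1 \<le> lam 1 \<Longrightarrow> greedy_inv n lam T (lam 1) 1 (greedy_perm n lam T)"
  using greedy_columns_inv[of "lam 1"] by (simp add: greedy_perm_def)

lemma greedy_perm_in_S_lam:
  assumes "1 \<le> lam 1"
  shows "greedy_perm n lam T \<in> S_lam n lam"
proof (rule S_lamI)
  let ?pi = "greedy_perm n lam T" and ?c = "col_len n lam (lam 1)"
  have inv: "greedy_inv n lam T (lam 1) 1 ?pi"
    using greedy_perm_inv[OF assms] .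
  then show "?pi permutes {1..n}"
    by (simp add: greedy_inv_def)
  have col_lengths: "col_lengths n lam = col_len n lam ` {1..lam 1}"
    by (auto simp: col_lengths_def)
  fix k
  assume k: "0 < k" "k < n" "k \<notin> col_lengths n lam"
  consider "k < ?c" | "?c < k"
    using k(3) assms by (force simp: col_lengths)
  then show "?pi k < ?pi (Suc k)"
  proof cases
    case 1
    then show ?thesis
      using inv k(1) entry_col_strict_mono[of "lam 1" k "Suc k"] assms by (simp add: greedy_inv_def)
  next
    case 2
    then show ?thesis
      using inv k by (simp add: greedy_inv_def col_lengths)
  qed
qed

end

theorem corollary4p2:
  fixes n :: nat and lam :: "nat \<Rightarrow> nat" and T :: "nat \<Rightarrow> nat \<Rightarrow> nat"
  assumes "0 < n"
    and "n_partition n lam"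
    and "\<exists>i\<in>{1..n}. lam i \<noteq> 0"
    and "lam n = 0"
    and "semistandard n lam T"
  shows "greedy_perm n lam T \<in> S_lam n lam"
proof -
  interpret semistandard_tableau n lam T
    using assms by unfold_locales
  obtain i where "i \<in> {1..n}" "lam i \<noteq> 0"
    using assms(3) by blast
  then have "1 \<le> lam 1"
    using n_partition_antimono[OF assms(2), of 1 i] by simp
  then show ?thesis
    by (rule greedy_perm_in_S_lam)
qed

end
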